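(* Let $L:\mathbb{R}^d\to\mathbb{R}^{\mathcal{Y}}_+$ be any polyhedral loss, and let $\ell:\mathcal{R}\to\mathbb{R}^{\mathcal{Y}}_+$ be a discrete loss that $L$ embeds. Then there exists a link function $\psi:\mathbb{R}^d\to\mathcal{R}$ such that $(L,\psi)$ is calibrated with respect to $\ell$.
   Context: $\mathcal{Y}$ is a finite set of labels; $\mathbb{R}^{\mathcal{Y}}_+$ is the nonnegative orthant; $\Delta_{\mathcal{Y}}=\{p\in\mathbb{R}^{\mathcal{Y}}_+ : \sum_y p_y=1\}$. A loss is a map $L:\mathcal{R}\to\mathbb{R}^{\mathcal{Y}}_+$ from a report set $\mathcal{R}$; its expected loss under $p\in\Delta_{\mathcal{Y}}$ is $\langle p, L(r)\rangle$. A loss is discrete if $\mathcal{R}$ is finite. A loss $L:\mathbb{R}^d\to\mathbb{R}^{\mathcal{Y}}_+$ is polyhedral if for each $y$, $u\mapsto L(u)_y$ is a polyhedral convex function (a pointwise maximum of finitely many affine functions). $L$ is minimizable if $\inf_r\langle p,L(r)\rangle$ is attained for every $p\in\Delta_{\mathcal{Y}}$; then $\mathrm{prop}[L](p)=\arg\min_{r}\langle p,L(r)\rangle$ (a nonempty-set-valued map, the property elicited by $L$), with level sets $\mathrm{prop}[L]_r=\{p : r\in\mathrm{prop}[L](p)\}$. A set $\mathcal{S}\subseteq\mathcal{R}$ is representative for a minimizable $L$ if $\mathrm{prop}[L](p)\cap\mathcal{S}\neq\emptyset$ for all $p\in\Delta_{\mathcal{Y}}$. A minimizable $L:\mathbb{R}^d\to\mathbb{R}^{\mathcal{Y}}_+$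 embeds $\ell:\mathcal{R}\to\mathbb{R}^{\mathcal{Y}}_+$ if there exist a representative set $\mathcal{S}$ for $\ell$ and an injective $\varphi:\mathcal{S}\to\mathbb{R}^d$ such that (i) $L(\varphi(r))=\ell(r)$ for all $r\in\mathcal{S}$, and (ii) for all $p\in\Delta_{\mathcal{Y}}$ and $r\in\mathcal{S}$, $r\in\mathrm{prop}[\ell](p)\iff\varphi(r)\in\mathrm{prop}[L](p)$. (Polyhedral losses are minimizable.) Given discrete $\ell$, surrogate $L:\mathbb{R}^d\to\mathbb{R}^{\mathcal{Y}}_+$ and link $\psi:\mathbb{R}^d\to\mathcal{R}$, $(L,\psi)$ is calibrated with respect to $\ell$ if for all $p\in\Delta_{\mathcal{Y}}$, $\inf_{u:\psi(u)\notin\mathrm{prop}[\ell](p)}\langle p,L(u)\rangle>\inf_{u\in\mathbb{R}^d}\langle p,L(u)\rangle$ (an infimum over the empty set is $+\infty$). *)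

theory Defs
  imports "HOL-Analysis.Analysis"
begin

(* Labels: finite type 'y.  A loss on report set 'r is a map  L :: 'r \<Rightarrow> 'y \<Rightarrow> real,
   L r y = L(r)_y.  Nonnegativity (values in R^Y_+) is a separate predicate. *)

definition prob_simplex :: "('y::finite \<Rightarrow> real) set" where
  "prob_simplex = {p. (\<forall>y. 0 \<le> p y) \<and> (\<Sum>y\<in>UNIV. p y) = 1}"

definition nonneg_loss :: "('r \<Rightarrow> 'y \<Rightarrow> real) \<Rightarrow> bool" where
  "nonneg_loss L \<longleftrightarrow> (\<forall>r y. 0 \<le> L r y)"

definition exp_loss :: "('r \<Rightarrow> 'y::finite \<Rightarrow> real) \<Rightarrow> ('y \<Rightarrow> real) \<Rightarrow> 'r \<Rightarrow> real" where
  "exp_loss L p r = (\<Sum>y\<in>UNIV. p y * L r y)"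

definition polyhedral_fun :: "('a::euclidean_space \<Rightarrow> real) \<Rightarrow> bool" where
  "polyhedral_fun f \<longleftrightarrow>
     (\<exists>A :: ('a \<times> real) set. finite A \<and> A \<noteq> {} \<and>
        (\<forall>u. f u = Max ((\<lambda>(a, b). a \<bullet> u + b) ` A)))"

definition polyhedral_loss :: "('a::euclidean_space \<Rightarrow> 'y \<Rightarrow> real) \<Rightarrow> bool" where
  "polyhedral_loss L \<longleftrightarrow> (\<forall>y. polyhedral_fun (\<lambda>u. L u y))"

definition minimizable :: "('r \<Rightarrow> 'y::finite \<Rightarrow> real) \<Rightarrow> bool" where
  "minimizable L \<longleftrightarrow>
     (\<forall>p\<in>prob_simplex. \<exists>r. \<forall>r'. exp_loss L p r \<le> exp_loss L p r')"

definition prop_of :: "('r \<Rightarrow> 'y::finite \<Rightarrow> real) \<Rightarrow> ('y \<Rightarrow> real) \<Rightarrow> 'r set" where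
  "prop_of L p = {r. \<forall>r'. exp_loss L p r \<le> exp_loss L p r'}"

definition representative :: "('r \<Rightarrow> 'y::finite \<Rightarrow> real) \<Rightarrow> 'r set \<Rightarrow> bool" where
  "representative L S \<longleftrightarrow> (\<forall>p\<in>prob_simplex. prop_of L p \<inter> S \<noteq> {})"

definition embeds ::
  "('a \<Rightarrow> 'y::finite \<Rightarrow> real) \<Rightarrow> ('r \<Rightarrow> 'y \<Rightarrow> real) \<Rightarrow> bool" where
  "embeds L l \<longleftrightarrow>
     minimizable L \<and>
     (\<exists>S \<phi>. representative l S \<and> inj_on \<phi> S \<and>
        (\<forall>r\<in>S. L (\<phi> r) = l r) \<and>
        (\<forall>p\<in>prob_simplex. \<forall>r\<in>S. r \<in> prop_of l p \<longleftrightarrow> \<phi> r \<in> prop_of L p))"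

(* calibration; Inf over the empty set is +\<infinity> via ereal *)
definition calibrated ::
  "('a \<Rightarrow> 'y::finite \<Rightarrow> real) \<Rightarrow> ('a \<Rightarrow> 'r) \<Rightarrow> ('r \<Rightarrow> 'y \<Rightarrow> real) \<Rightarrow> bool" where
  "calibrated L \<psi> l \<longleftrightarrow>
     (\<forall>p\<in>prob_simplex.
        (INF u\<in>{u. \<psi> u \<notin> prop_of l p}. ereal (exp_loss L p u))
          > (INF u\<in>UNIV. ereal (exp_loss L p u)))"

end

(* An embedding makes the Bayes risk of L equal to that of l, attained where L coincides with a
   row of l.  The level sets of prop[l] are polytopes, spanned by finitely many vertices.  On a set
   of vertices without a common l-optimal report the surrogate excess risk cannot be small
   everywhere at once (otherwise the surrogate optimum at their average would, via the embedding,
   be such a report), and finiteness makes this a uniform gap eps.  Linking u to a report optimal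
   at every vertex where u has excess below eps bounds the regret of l by C times the surrogate
   excess on the vertices; on each level set both sides are affine in p, so the bound holds on the
   whole simplex.  As l has finitely many reports, its regret is bounded away from 0 off the
   optimal set, and a linear regret bound yields calibration. *)

theory Submission
  imports Defs
begin

definition bayes_risk :: "('r::finite \<Rightarrow> 'y::finite \<Rightarrow> real) \<Rightarrow> ('y \<Rightarrow> real) \<Rightarrow> real" where
  "bayes_risk l p = Min (range (exp_loss l p))"

(* Measured against the Bayes risk of l: excess_risk l l is the regret of l, and for L embedding l
   the two Bayes risks agree, so excess_risk l L is the surrogate regret. *)
definition excess_risk ::
  "('r::finite \<Rightarrow> 'y::finite \<Rightarrow> real) \<Rightarrow> ('a \<Rightarrow> 'y \<Rightarrow> real) \<Rightarrow> ('y \<Rightarrow> real) \<Rightarrow> 'a \<Rightarrow> real" where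
  "excess_risk l L p u = exp_loss L p u - bayes_risk l p"

definition level_set :: "('r \<Rightarrow> 'y::finite \<Rightarrow> real) \<Rightarrow> 'r \<Rightarrow> ('y \<Rightarrow> real) set" where
  "level_set l r = {p \<in> prob_simplex. r \<in> prop_of l p}"

definition nonneg_span :: "('y \<Rightarrow> real) set \<Rightarrow> ('y \<Rightarrow> real) set" where
  "nonneg_span V = {(\<lambda>y. \<Sum>q\<in>V. \<alpha> q * q y) | \<alpha>. \<forall>q\<in>V. 0 \<le> \<alpha> q}"

lemma bayes_risk_le: "bayes_risk l p \<le> exp_loss l p r"
  unfolding bayes_risk_def by (rule Min_le) auto

lemma bayes_risk_attained: "\<exists>r. exp_loss l p r = bayes_risk l p"
proof -
  have "bayes_risk l p \<in> range (exp_loss l p)"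
    unfolding bayes_risk_def by (rule Min_in) auto
  then show ?thesis by auto
qed

lemma prop_of_iff_bayes_risk: "r \<in> prop_of l p \<longleftrightarrow> exp_loss l p r = bayes_risk l p"
proof
  assume "r \<in> prop_of l p"
  moreover obtain r' where "exp_loss l p r' = bayes_risk l p"
    using bayes_risk_attained by blast
  ultimately have "exp_loss l p r \<le> bayes_risk l p"
    unfolding prop_of_def by (metis mem_Collect_eq)
  then show "exp_loss l p r = bayes_risk l p"
    using bayes_risk_le[of l p r] by linarith
qed (simp add: prop_of_def bayes_risk_le)

lemma prop_of_iff_excess_risk_nonpos: "r \<in> prop_of l p \<longleftrightarrow> excess_risk l l p r \<le> 0"
  unfolding excess_risk_def prop_of_iff_bayes_risk using bayes_risk_le[of l p r] by linarith

lemma prop_of_nonempty: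
  fixes l :: "'r::finite \<Rightarrow> 'y::finite \<Rightarrow> real"
  shows "\<exists>r. r \<in> prop_of l p"
proof -
  obtain r where "exp_loss l p r = bayes_risk l p"
    using bayes_risk_attained by blast
  then have "r \<in> prop_of l p"
    by (simp add: prop_of_iff_bayes_risk)
  then show ?thesis ..
qed

lemma bayes_risk_level_set: "p \<in> level_set l r \<Longrightarrow> bayes_risk l p = exp_loss l p r"
  unfolding level_set_def by (simp add: prop_of_iff_bayes_risk)

lemma exp_loss_combination:
  "exp_loss L (\<lambda>y. \<Sum>q\<in>V. \<alpha> q * q y) u = (\<Sum>q\<in>V. \<alpha> q * exp_loss L q u)"
  unfolding exp_loss_def
  by (simp add: sum_distrib_left sum_distrib_right mult.assoc sum.swap[of _ UNIV V])

lemma combination_in_prob_simplex: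
  assumes "V \<subseteq> prob_simplex" "\<And>q. q \<in> V \<Longrightarrow> 0 \<le> \<alpha> q" "(\<Sum>q\<in>V. \<alpha> q) = 1"
  shows "(\<lambda>y. \<Sum>q\<in>V. \<alpha> q * q y) \<in> prob_simplex"
proof -
  have "(\<Sum>y\<in>UNIV. \<Sum>q\<in>V. \<alpha> q * q y) = exp_loss (\<lambda>_ _. 1) (\<lambda>y. \<Sum>q\<in>V. \<alpha> q * q y) ()"
    by (simp add: exp_loss_def)
  also have "\<dots> = (\<Sum>q\<in>V. \<alpha> q)"
    unfolding exp_loss_combination using assms(1)
    by (intro sum.cong) (auto simp: exp_loss_def prob_simplex_def)
  finally show ?thesis
    using assms unfolding prob_simplex_def by (auto intro!: sum_nonneg)
qed

lemma excess_risk_combination: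
  assumes "V \<subseteq> level_set l r" "p \<in> level_set l r" "p = (\<lambda>y. \<Sum>q\<in>V. \<alpha> q * q y)"
  shows "excess_risk l L p u = (\<Sum>q\<in>V. \<alpha> q * excess_risk l L q u)"
proof -
  \<comment> \<open>On a level set the Bayes risk is linear in p, hence so are excess risks.\<close>
  have affine: "excess_risk l L x u = exp_loss (\<lambda>_ y. L u y - l r y) x ()" if "x \<in> level_set l r" for x
    unfolding excess_risk_def bayes_risk_level_set[OF that] exp_loss_def
    by (simp add: right_diff_distrib sum_subtractf)
  show ?thesis
    unfolding affine[OF assms(2)] using assms(1)
    by (subst assms(3)) (auto simp: exp_loss_combination affine intro!: sum.cong)
qed

(* Polytopes live in Euclidean space, so the level set is transported to real ^ 'y. *)
lemma polytope_level_set: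
  fixes l :: "'r::finite \<Rightarrow> 'y::finite \<Rightarrow> real"
  shows "polytope {x :: real ^ 'y. vec_nth x \<in> level_set l r}" (is "polytope ?D")
proof -
  have inner_indicator: "(\<chi> i. if i = y then -1 else 0) \<bullet> x = - (x $ y)" for x :: "real ^ 'y" and y
    by (simp add: inner_vec_def if_distrib[of "\<lambda>a. a * _"] cong: if_cong)
  have D_eq: "?D = (\<Inter>y. {x. (\<chi> i. if i = y then -1 else 0) \<bullet> x \<le> (0::real)})
      \<inter> {x. (\<chi> i. 1) \<bullet> x \<le> (1::real)} \<inter> {x. (\<chi> i. 1) \<bullet> x \<ge> (1::real)}
      \<inter> (\<Inter>r'. {x. (\<chi> i. l r i - l r' i) \<bullet> x \<le> (0::real)})"
    unfolding inner_indicator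
    by (auto simp: level_set_def prob_simplex_def prop_of_def exp_loss_def inner_vec_def
        sum_subtractf algebra_simps)
  have "polyhedron ?D"
    unfolding D_eq
    by (intro polyhedron_Int polyhedron_Inter polyhedron_halfspace_le polyhedron_halfspace_ge)
       (auto simp: polyhedron_halfspace_le)
  moreover have "?D \<subseteq> cball 0 1"
  proof
    fix x assume "x \<in> ?D"
    then have "(\<Sum>y\<in>UNIV. \<bar>x $ y\<bar>) = 1"
      by (simp add: level_set_def prob_simplex_def)
    then show "x \<in> cball 0 1"
      using norm_le_l1_cart[of x] by simp
  qed
  ultimately show ?thesis
    by (meson bounded_cball bounded_subset polytope_eq_bounded_polyhedron)
qed

lemma level_set_finitely_generated:
  fixes l :: "'r::finite \<Rightarrow> 'y::finite \<Rightarrow> real"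
  shows "\<exists>V. finite V \<and> V \<subseteq> level_set l r \<and> level_set l r \<subseteq> nonneg_span V"
proof -
  obtain W where W: "finite W" "{x. vec_nth x \<in> level_set l r} = convex hull W"
    using polytope_level_set unfolding polytope_def by blast
  have inj: "inj_on vec_nth W"
    by (simp add: inj_on_def vec_nth_inject)
  show ?thesis
  proof (intro exI[of _ "vec_nth ` W"] conjI)
    show "finite (vec_nth ` W)" using W(1) by simp
    show "vec_nth ` W \<subseteq> level_set l r"
      using hull_subset[of W convex] W(2) by blast
    show "level_set l r \<subseteq> nonneg_span (vec_nth ` W)"
    proof
      fix p assume "p \<in> level_set l r"
      then have "vec_lambda p \<in> convex hull W"
        using W(2) by (metis (mono_tags) mem_Collect_eq vec_lambda_inverse UNIV_I)
      then obtain u where u: "\<forall>x\<in>W. 0 \<le> u x" "(\<Sum>x\<in>W. u x *\<^sub>R x) = vec_lambda p"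
        by (auto simp: convex_hull_finite[OF W(1)])
      have "p = (\<lambda>y. \<Sum>q\<in>vec_nth ` W. (u \<circ> vec_lambda) q * q y)"
      proof
        fix y
        have "p y = vec_lambda p $ y" by simp
        also have "\<dots> = (\<Sum>x\<in>W. u x * x $ y)" by (simp add: u(2)[symmetric])
        finally show "p y = (\<Sum>q\<in>vec_nth ` W. (u \<circ> vec_lambda) q * q y)"
          by (simp add: sum.reindex[OF inj])
      qed
      moreover have "\<forall>q\<in>vec_nth ` W. 0 \<le> (u \<circ> vec_lambda) q"
        using u(1) by auto
      ultimately show "p \<in> nonneg_span (vec_nth ` W)"
        unfolding nonneg_span_def by blast
    qed
  qed
qed

lemma embeds_optimal_pair:
  assumes "embeds L l" "p \<in> prob_simplex"
  obtains r u where "L u = l r" "u \<in> prop_of L p" "r \<in> prop_of l p"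
proof -
  obtain S \<phi> where "representative l S" "\<forall>r\<in>S. L (\<phi> r) = l r"
    "\<forall>p\<in>prob_simplex. \<forall>r\<in>S. r \<in> prop_of l p \<longleftrightarrow> \<phi> r \<in> prop_of L p"
    using assms(1) unfolding embeds_def by blast
  then show thesis
    using assms(2) that unfolding representative_def by blast
qed

lemma embeds_attains_bayes_risk:
  assumes "embeds L l" "p \<in> prob_simplex"
  shows "\<exists>u. exp_loss L p u = bayes_risk l p"
proof -
  obtain r u where "L u = l r" "r \<in> prop_of l p"
    using embeds_optimal_pair[OF assms] by blast
  then have "exp_loss L p u = bayes_risk l p"
    by (simp add: exp_loss_def prop_of_iff_bayes_risk)
  then show ?thesis ..
qed

lemma embeds_excess_risk_nonneg:
  assumes "embeds L l" "p \<in> prob_simplex"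
  shows "0 \<le> excess_risk l L p u"
proof -
  obtain r u' where "L u' = l r" "u' \<in> prop_of L p" "r \<in> prop_of l p"
    using embeds_optimal_pair[OF assms] .
  then have "bayes_risk l p = exp_loss L p u'"
    by (simp add: exp_loss_def prop_of_iff_bayes_risk)
  also have "\<dots> \<le> exp_loss L p u"
    using \<open>u' \<in> prop_of L p\<close> by (simp add: prop_of_def)
  finally show ?thesis
    by (simp add: excess_risk_def)
qed

lemma embeds_common_optimal_report:
  assumes "embeds L l" "finite Z" "Z \<subseteq> prob_simplex"
    and small: "\<And>e. e > 0 \<Longrightarrow> \<exists>u. \<forall>q\<in>Z. excess_risk l L q u < e"
  shows "\<exists>r. \<forall>q\<in>Z. r \<in> prop_of l q"
proof (cases "Z = {}")
  case True
  then show ?thesis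
    by simp
next
  case False
  define c where "c = real (card Z)"
  have c: "c > 0" using False assms(2) unfolding c_def by (simp add: card_gt_0_iff)
  \<comment> \<open>At the average of Z the embedding gives a surrogate optimum u0 that is a row of l; u0
    minimises the total excess risk s, whose infimum is 0.\<close>
  define p where "p = (\<lambda>y. \<Sum>q\<in>Z. 1 / c * q y)"
  have "p \<in> prob_simplex"
    unfolding p_def using assms(3) c by (intro combination_in_prob_simplex) (auto simp: c_def)
  then obtain r u0 where u0: "L u0 = l r" "u0 \<in> prop_of L p" and "r \<in> prop_of l p"
    using embeds_optimal_pair[OF assms(1)] by blast
  define s where "s u = (\<Sum>q\<in>Z. excess_risk l L q u)" for u
  have s_eq: "s u = c * exp_loss L p u - (\<Sum>q\<in>Z. bayes_risk l q)" for u
    using c unfolding s_def p_def exp_loss_combination excess_risk_def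
    by (simp add: sum_subtractf sum_distrib_left)
  have s_min: "s u0 \<le> s u" for u
  proof -
    have "exp_loss L p u0 \<le> exp_loss L p u"
      using u0(2) by (simp add: prop_of_def)
    then show ?thesis
      unfolding s_eq using c by (simp add: mult_left_mono)
  qed
  have "s u0 \<le> 0"
  proof (rule ccontr)
    assume "\<not> s u0 \<le> 0"
    then obtain u where u: "\<forall>q\<in>Z. excess_risk l L q u < s u0 / c"
      using small[of "s u0 / c"] c by auto
    have "s u < (\<Sum>q\<in>Z. s u0 / c)"
      unfolding s_def[of u] using False assms(2) u by (intro sum_strict_mono) auto
    also have "\<dots> = s u0" using c unfolding c_def by simp
    finally show False using s_min[of u] by simp
  qed
  have nonneg: "\<forall>q\<in>Z. 0 \<le> excess_risk l L q u0"
    using embeds_excess_risk_nonneg[OF assms(1)] assms(3) by blast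
  then have "0 \<le> s u0"
    unfolding s_def by (simp add: sum_nonneg)
  with \<open>s u0 \<le> 0\<close> have "s u0 = 0"
    by simp
  then have "\<forall>q\<in>Z. excess_risk l L q u0 = 0"
    using sum_nonneg_eq_0_iff[OF assms(2), of "\<lambda>q. excess_risk l L q u0"] nonneg
    unfolding s_def by simp
  then have "\<forall>q\<in>Z. r \<in> prop_of l q"
    using u0(1) by (simp add: excess_risk_def exp_loss_def prop_of_iff_bayes_risk)
  then show ?thesis ..
qed

lemma embeds_uniform_gap:
  assumes "embeds L l" "finite Q" "Q \<subseteq> prob_simplex"
  shows "\<exists>\<epsilon>>0. \<forall>u. \<exists>r. \<forall>q\<in>Q. excess_risk l L q u < \<epsilon> \<longrightarrow> r \<in> prop_of l q"
proof -
  define Bad where "Bad = {Z. Z \<subseteq> Q \<and> \<not> (\<exists>r. \<forall>q\<in>Z. r \<in> prop_of l q)}"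
  have "finite Bad"
    using assms(2) by (rule rev_finite_subset[OF finite_Pow_iff[THEN iffD2]]) (auto simp: Bad_def)
  have "\<exists>e>0. \<forall>u. \<exists>q\<in>Z. e \<le> excess_risk l L q u" if "Z \<in> Bad" for Z
  proof (rule ccontr)
    assume "\<not> ?thesis"
    then have small: "\<exists>u. \<forall>q\<in>Z. excess_risk l L q u < e" if "e > 0" for e
      using that by (auto simp: not_le)
    have "finite Z" "Z \<subseteq> prob_simplex"
      using \<open>Z \<in> Bad\<close> assms(2,3) finite_subset unfolding Bad_def by auto
    then have "\<exists>r. \<forall>q\<in>Z. r \<in> prop_of l q"
      using small by (rule embeds_common_optimal_report[OF assms(1)])
    then show False
      using \<open>Z \<in> Bad\<close> unfolding Bad_def by blast
  qed
  then obtain e where e: "\<And>Z. Z \<in> Bad \<Longrightarrow> e Z > 0"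
    "\<And>Z u. Z \<in> Bad \<Longrightarrow> \<exists>q\<in>Z. e Z \<le> excess_risk l L q u"
    by metis
  define \<epsilon> where "\<epsilon> = Min (insert 1 (e ` Bad))"
  show ?thesis
  proof (intro exI[of _ \<epsilon>] conjI allI)
    show "\<epsilon> > 0"
      unfolding \<epsilon>_def using \<open>finite Bad\<close> e(1) by (simp add: Min_gr_iff)
    fix u
    let ?Z = "{q \<in> Q. excess_risk l L q u < \<epsilon>}"
    have "?Z \<notin> Bad"
    proof
      assume bad: "?Z \<in> Bad"
      then have "\<epsilon> \<le> e ?Z"
        unfolding \<epsilon>_def using \<open>finite Bad\<close> by (intro Min_le) auto
      then show False
        using e(2)[OF bad, of u] by fastforce
    qed
    then show "\<exists>r. \<forall>q\<in>Q. excess_risk l L q u < \<epsilon> \<longrightarrow> r \<in> prop_of l q"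
      unfolding Bad_def by auto
  qed
qed

lemma embeds_regret_bound_on_finite:
  fixes l :: "'r::finite \<Rightarrow> 'y::finite \<Rightarrow> real"
  assumes "embeds L l" "finite Q" "Q \<subseteq> prob_simplex"
  shows "\<exists>\<psi> C. C > 0 \<and> (\<forall>q\<in>Q. \<forall>u. excess_risk l l q (\<psi> u) \<le> C * excess_risk l L q u)"
proof -
  obtain \<epsilon> where \<epsilon>: "\<epsilon> > 0"
    "\<And>u. \<exists>r. \<forall>q\<in>Q. excess_risk l L q u < \<epsilon> \<longrightarrow> r \<in> prop_of l q"
    using embeds_uniform_gap[OF assms] by blast
  define \<psi> where "\<psi> u = (SOME r. \<forall>q\<in>Q. excess_risk l L q u < \<epsilon> \<longrightarrow> r \<in> prop_of l q)" for u
  have \<psi>: "\<psi> u \<in> prop_of l q" if "q \<in> Q" "excess_risk l L q u < \<epsilon>" for q u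
    using someI_ex[OF \<epsilon>(2)[of u]] that unfolding \<psi>_def by blast
  define B where "B = Max (insert 1 ((\<lambda>(q, r). excess_risk l l q r) ` (Q \<times> UNIV)))"
  have B: "1 \<le> B" "\<And>q r. q \<in> Q \<Longrightarrow> excess_risk l l q r \<le> B"
    unfolding B_def using assms(2) by (auto intro!: Max_ge)
  show ?thesis
  proof (intro exI[of _ \<psi>] exI[of _ "B / \<epsilon>"] conjI ballI allI)
    show "B / \<epsilon> > 0" using B(1) \<epsilon>(1) by simp
    fix q u assume q: "q \<in> Q"
    have excess_nonneg: "0 \<le> excess_risk l L q u"
      using embeds_excess_risk_nonneg[OF assms(1)] q assms(3) by blast
    show "excess_risk l l q (\<psi> u) \<le> B / \<epsilon> * excess_risk l L q u"
    proof (cases "excess_risk l L q u < \<epsilon>")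
      case True
      then have "excess_risk l l q (\<psi> u) \<le> 0"
        using \<psi>[OF q] prop_of_iff_excess_risk_nonpos by blast
      also have "0 \<le> B / \<epsilon> * excess_risk l L q u"
        using B(1) \<epsilon>(1) excess_nonneg by simp
      finally show ?thesis .
    next
      case False
      have "excess_risk l l q (\<psi> u) \<le> B / \<epsilon> * \<epsilon>"
        using B(2)[OF q] \<epsilon>(1) by simp
      also have "\<dots> \<le> B / \<epsilon> * excess_risk l L q u"
        using False B(1) \<epsilon>(1) by (intro mult_left_mono) auto
      finally show ?thesis .
    qed
  qed
qed

lemma embeds_linear_regret_bound:
  fixes l :: "'r::finite \<Rightarrow> 'y::finite \<Rightarrow> real"
  assumes "embeds L l"
  shows "\<exists>\<psi> C. C > 0 \<and> (\<forall>p\<in>prob_simplex. \<forall>u. excess_risk l l p (\<psi> u) \<le> C * excess_risk l L p u)"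
proof -
  define V where "V r = (SOME V. finite V \<and> V \<subseteq> level_set l r \<and> level_set l r \<subseteq> nonneg_span V)"
    for r
  have V: "finite (V r) \<and> V r \<subseteq> level_set l r \<and> level_set l r \<subseteq> nonneg_span (V r)" for r
    unfolding V_def by (rule someI_ex[OF level_set_finitely_generated])
  have "finite (\<Union>r. V r)"
    using V by simp
  moreover have "(\<Union>r. V r) \<subseteq> prob_simplex"
    using V unfolding level_set_def by blast
  ultimately have "\<exists>\<psi> C. C > 0 \<and> (\<forall>q\<in>(\<Union>r. V r). \<forall>u. excess_risk l l q (\<psi> u) \<le> C * excess_risk l L q u)"
    by (rule embeds_regret_bound_on_finite[OF assms])
  then obtain \<psi> C where C: "C > 0"
    "\<forall>q\<in>(\<Union>r. V r). \<forall>u. excess_risk l l q (\<psi> u) \<le> C * excess_risk l L q u"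
    by blast
  show ?thesis
  proof (intro exI[of _ \<psi>] exI[of _ C] conjI ballI allI)
    show "C > 0" by (fact C(1))
    fix p :: "'y \<Rightarrow> real" and u
    assume "p \<in> prob_simplex"
    moreover obtain r where "r \<in> prop_of l p"
      using prop_of_nonempty by blast
    ultimately have p: "p \<in> level_set l r"
      unfolding level_set_def by blast
    then have "p \<in> nonneg_span (V r)"
      using V by blast
    then obtain \<alpha> where \<alpha>: "p = (\<lambda>y. \<Sum>q\<in>V r. \<alpha> q * q y)" "\<forall>q\<in>V r. 0 \<le> \<alpha> q"
      unfolding nonneg_span_def by blast
    have V_sub: "V r \<subseteq> level_set l r"
      using V by blast
    have "excess_risk l l p (\<psi> u) = (\<Sum>q\<in>V r. \<alpha> q * excess_risk l l q (\<psi> u))"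
      by (rule excess_risk_combination[OF V_sub p \<alpha>(1)])
    also have "\<dots> \<le> (\<Sum>q\<in>V r. \<alpha> q * (C * excess_risk l L q u))"
      using \<alpha>(2) C(2) by (intro sum_mono mult_left_mono) auto
    also have "\<dots> = C * excess_risk l L p u"
      by (simp add: excess_risk_combination[OF V_sub p \<alpha>(1)] sum_distrib_left mult.left_commute)
    finally show "excess_risk l l p (\<psi> u) \<le> C * excess_risk l L p u" .
  qed
qed

lemma calibrated_if_linear_regret_bound:
  fixes l :: "'r::finite \<Rightarrow> 'y::finite \<Rightarrow> real"
  assumes attains: "\<And>p. p \<in> prob_simplex \<Longrightarrow> \<exists>u. exp_loss L p u = bayes_risk l p"
    and "C > 0"
    and bound: "\<And>p u. p \<in> prob_simplex \<Longrightarrow> excess_risk l l p (\<psi> u) \<le> C * excess_risk l L p u"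
  shows "calibrated L \<psi> l"
  unfolding calibrated_def
proof
  fix p :: "'y \<Rightarrow> real" assume p: "p \<in> prob_simplex"
  define gap where "gap = Min (insert 1 {x \<in> range (excess_risk l l p). x > 0})"
  have "gap > 0"
    unfolding gap_def by (subst Min_gr_iff) auto
  have gap_le: "gap \<le> excess_risk l l p r" if "r \<notin> prop_of l p" for r
    unfolding gap_def using that prop_of_iff_excess_risk_nonpos[of r l p] by (intro Min_le) auto
  have far: "bayes_risk l p + gap / C \<le> exp_loss L p u" if "\<psi> u \<notin> prop_of l p" for u
  proof -
    have "gap \<le> C * excess_risk l L p u"
      using gap_le[OF that] bound[OF p, of u] by linarith
    then show ?thesis
      using \<open>C > 0\<close> by (simp add: excess_risk_def field_simps)
  qed
  obtain u0 where "exp_loss L p u0 = bayes_risk l p"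
    using attains[OF p] by blast
  then have "(INF u. ereal (exp_loss L p u)) \<le> ereal (bayes_risk l p)"
    by (metis INF_lower UNIV_I)
  also have "\<dots> < ereal (bayes_risk l p + gap / C)"
    using \<open>gap > 0\<close> \<open>C > 0\<close> by simp
  also have "\<dots> \<le> (INF u\<in>{u. \<psi> u \<notin> prop_of l p}. ereal (exp_loss L p u))"
    using far by (auto intro: INF_greatest)
  finally show "(INF u\<in>{u. \<psi> u \<notin> prop_of l p}. ereal (exp_loss L p u)) > (INF u. ereal (exp_loss L p u))" .
qed

theorem theorem2:
  fixes L :: "real ^ 'd \<Rightarrow> 'y::finite \<Rightarrow> real"
    and l :: "'r::finite \<Rightarrow> 'y \<Rightarrow> real"
  assumes "nonneg_loss L" and "polyhedral_loss L"
    and "nonneg_loss l"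
    and "embeds L l"
  shows "\<exists>\<psi> :: real ^ 'd \<Rightarrow> 'r. calibrated L \<psi> l"
proof -
  obtain \<psi> C where "C > 0"
    and bound: "\<And>p u. p \<in> prob_simplex \<Longrightarrow> excess_risk l l p (\<psi> u) \<le> C * excess_risk l L p u"
    using embeds_linear_regret_bound[OF assms(4)] by blast
  have "calibrated L \<psi> l"
    using embeds_attains_bayes_risk[OF assms(4)] \<open>C > 0\<close> bound
    by (rule calibrated_if_linear_regret_bound)
  then show ?thesis by blast
qed

end
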